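(* Let $a,b,q$ be parameters (complex numbers or indeterminates) such that none of the denominators below vanishes, and put $c(n,a,b,q)=\frac{(b;q)_n}{(a;q)_n}$. Define, for $n\ge 0$, $$T(2n)=\frac{q^n(1-q^nb)(1-q^{n-1}a)}{(1-q^{2n-1}a)(1-q^{2n}a)},\qquad T(2n+1)=\frac{q^n(1-q^{n+1})(b-q^na)}{(1-q^{2n+1}a)(1-q^{2n}a)},$$ and define numbers $A(n,k)$ for integers $n\ge 0$ and all integers $k$ by $$A(2n,2k)=\begin{bmatrix} n\\ k\end{bmatrix} c(n-k,q^{2k}a,q^kb,q),\qquad A(2n+1,2k+1)=\begin{bmatrix} n\\ k\end{bmatrix} c(n-k,q^{2k+1}a,q^{k+1}b,q),$$ and $A(n,k)=0$ whenever $n-k$ is odd. Then $$A(0,k)=[k=0],\qquad A(n,0)=T(0)A(n-1,1)\ (n\ge1),\qquad A(n,k)=A(n-1,k-1)+T(k)A(n-1,k+1)\ (n\ge1,\ k\ge1).$$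
   Context: Notation: $(x;q)_n=\prod_{j=0}^{n-1}(1-q^jx)$; $\begin{bmatrix} n\\ k\end{bmatrix}=\frac{(q;q)_n}{(q;q)_k(q;q)_{n-k}}$ for $0\le k\le n$ and $\begin{bmatrix} n\\ k\end{bmatrix}=0$ for $k<0$ or $k>n$. $[P]$ denotes $1$ if $P$ is true and $0$ otherwise. (At $n=0$ the factor $1-q^{-1}a$ cancels, so $T(0)=\frac{1-b}{1-a}$.) *)

theory Defs
  imports Complex_Main
begin

definition qpoch :: "complex \<Rightarrow> complex \<Rightarrow> nat \<Rightarrow> complex" where
  "qpoch x q n = (\<Prod>j<n. (1 - q ^ j * x))"

definition qbinom :: "complex \<Rightarrow> nat \<Rightarrow> int \<Rightarrow> complex" where
  "qbinom q n k = (if 0 \<le> k \<and> k \<le> int n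
      then qpoch q q n / (qpoch q q (nat k) * qpoch q q (n - nat k)) else 0)"

definition cfun :: "nat \<Rightarrow> complex \<Rightarrow> complex \<Rightarrow> complex \<Rightarrow> complex" where
  "cfun n a b q = qpoch b q n / qpoch a q n"

text \<open>T(k); T(0) is the cancelled value (1-b)/(1-a).\<close>
definition Tfun :: "complex \<Rightarrow> complex \<Rightarrow> complex \<Rightarrow> nat \<Rightarrow> complex" where
  "Tfun a b q k =
    (if k = 0 then (1 - b) / (1 - a)
     else if even k then
       (let n = k div 2 in
        q ^ n * (1 - q ^ n * b) * (1 - q ^ (n - 1) * a)
          / ((1 - q ^ (2 * n - 1) * a) * (1 - q ^ (2 * n) * a)))
     else
       (let n = k div 2 in
        q ^ n * (1 - q ^ (n + 1)) * (b - q ^ n * a)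
          / ((1 - q ^ (2 * n + 1) * a) * (1 - q ^ (2 * n) * a))))"

definition Afun :: "complex \<Rightarrow> complex \<Rightarrow> complex \<Rightarrow> nat \<Rightarrow> int \<Rightarrow> complex" where
  "Afun a b q n k =
    (if odd (int n - k) then 0
     else if even n then
       (let m = n div 2; j = k div 2 in
        if 0 \<le> j \<and> j \<le> int m then
          qbinom q m j * cfun (m - nat j) (q ^ (2 * nat j) * a) (q ^ nat j * b) q
        else 0)
     else
       (let m = n div 2; j = k div 2 in
        if 0 \<le> j \<and> j \<le> int m then
          qbinom q m j * cfun (m - nat j) (q ^ (2 * nat j + 1) * a) (q ^ (nat j + 1) * b) q
        else 0))"

end

theory Submission
  imports Defs
begin

text \<open>
  The even rows A(2m, 2j) form one family Aeven a b q m j, and the odd rows are the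
  same family with (a, b) replaced by (qa, qb). After cancelling the q-binomial quotients
  [m, j+1]/[m, j] and [m+1, j+1]/[m, j], each recurrence becomes a contiguous relation for
  c(d, x, y) = (y;q)_d / (x;q)_d, which is checked by peeling the first factor off numerator
  and denominator. The boundary columns j = m need no separate treatment: there the
  relevant factor 1 - q^(m-j) vanishes, as does the q-binomial outside its range.
\<close>

lemma qpoch_Suc: "qpoch x q (Suc n) = qpoch x q n * (1 - q ^ n * x)"
  by (simp add: qpoch_def)

lemma qpoch_0 [simp]: "qpoch x q 0 = 1"
  by (simp add: qpoch_def)

lemma cfun_0 [simp]: "cfun 0 x y q = 1"
  by (simp add: cfun_def)

lemma qpoch_Suc_left: "qpoch x q (Suc n) = (1 - x) * qpoch (q * x) q n"
  unfolding qpoch_def by (subst prod.lessThan_Suc_shift) (simp add: ac_simps)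

lemma qpoch_nonzero:
  assumes "\<And>i. i < n \<Longrightarrow> 1 - q ^ i * x \<noteq> 0"
  shows "qpoch x q n \<noteq> 0"
  using assms unfolding qpoch_def by simp

lemma qpoch_q_nonzero:
  assumes "\<And>i. 1 - q ^ Suc i \<noteq> 0"
  shows "qpoch q q n \<noteq> 0"
  using assms by (intro qpoch_nonzero) (simp add: mult.commute)

lemma cfun_Suc_left:
  assumes "1 - x \<noteq> 0"
  shows "cfun (Suc n) x y q = (1 - y) / (1 - x) * cfun n (q * x) (q * y) q"
  using assms by (simp add: cfun_def qpoch_Suc_left)

lemma cfun_Suc_reduce:
  assumes nz: "\<And>i. 1 - q ^ i * x \<noteq> 0"
  shows "cfun (Suc e) (q * x) (q * y) q = (1 - q ^ Suc e * y) / (1 - q * x) * cfun e (q\<^sup>2 * x) (q * y) q"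
    and "cfun (Suc e) (q * x) y q = (1 - y) / (1 - q * x) * cfun e (q\<^sup>2 * x) (q * y) q"
    and "cfun (Suc e) x y q
         = (1 - y) * (1 - q ^ Suc e * x) / ((1 - x) * (1 - q * x)) * cfun e (q\<^sup>2 * x) (q * y) q"
proof -
  define R where "R = qpoch (q\<^sup>2 * x) q e"
  have "R \<noteq> 0"
    unfolding R_def by (rule qpoch_nonzero) (metis nz power_add mult.assoc)
  have "1 - q ^ Suc e * x \<noteq> 0"
    using nz[of "Suc e"] by simp
  have den_qx: "qpoch (q * x) q (Suc e) = (1 - q * x) * R"
    unfolding R_def qpoch_Suc_left by (simp add: power2_eq_square mult.assoc)
  have "qpoch x q (Suc e) * (1 - q ^ Suc e * x) = (1 - x) * (1 - q * x) * R"
    unfolding qpoch_Suc[symmetric] qpoch_Suc_left[of x q "Suc e"] den_qx by simp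
  then have den_x: "qpoch x q (Suc e) = (1 - x) * (1 - q * x) * R / (1 - q ^ Suc e * x)"
    using \<open>1 - q ^ Suc e * x \<noteq> 0\<close> by (simp add: eq_divide_eq)
  have num_qy: "qpoch (q * y) q (Suc e) = (1 - q ^ Suc e * y) * qpoch (q * y) q e"
    by (simp add: qpoch_Suc mult.commute mult.left_commute)
  show "cfun (Suc e) (q * x) (q * y) q = (1 - q ^ Suc e * y) / (1 - q * x) * cfun e (q\<^sup>2 * x) (q * y) q"
    unfolding cfun_def num_qy den_qx R_def by simp
  show "cfun (Suc e) (q * x) y q = (1 - y) / (1 - q * x) * cfun e (q\<^sup>2 * x) (q * y) q"
    unfolding cfun_def qpoch_Suc_left[of y] den_qx R_def by simp
  show "cfun (Suc e) x y q
         = (1 - y) * (1 - q ^ Suc e * x) / ((1 - x) * (1 - q * x)) * cfun e (q\<^sup>2 * x) (q * y) q"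
    unfolding cfun_def qpoch_Suc_left[of y] den_x R_def by simp
qed

text \<open>For d = 0 the truncated index d - 1 is harmless, since its coefficient 1 - q^d vanishes.\<close>

lemma cfun_contiguous_ab:
  assumes nz: "\<And>i. 1 - q ^ i * x \<noteq> 0"
  shows "cfun d (q * x) (q * y) q - cfun d x y q
       = (1 - q ^ d) * (y - x) / ((1 - x) * (1 - q * x)) * cfun (d - 1) (q\<^sup>2 * x) (q * y) q"
proof (cases d)
  case (Suc e)
  have "1 - x \<noteq> 0" "1 - q * x \<noteq> 0"
    using nz[of 0] nz[of 1] by simp_all
  then show ?thesis
    unfolding Suc cfun_Suc_reduce(1,3)[OF nz, of e y] by (simp add: divide_simps) algebra
qed simp

lemma cfun_contiguous_a:
  assumes nz: "\<And>i. 1 - q ^ i * x \<noteq> 0"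
  shows "(1 - u * q ^ d) * cfun d (q * x) y q
       = (1 - u) * cfun d x y q
         + (1 - q ^ d) * (u - x) * (1 - y) / ((1 - x) * (1 - q * x)) * cfun (d - 1) (q\<^sup>2 * x) (q * y) q"
proof (cases d)
  case (Suc e)
  have "1 - x \<noteq> 0" "1 - q * x \<noteq> 0"
    using nz[of 0] nz[of 1] by simp_all
  then show ?thesis
    unfolding Suc cfun_Suc_reduce(2,3)[OF nz, of e y] by (simp add: divide_simps) algebra
qed simp

lemma qbinom_of_nat:
  "j \<le> m \<Longrightarrow> qbinom q m (int j) = qpoch q q m / (qpoch q q j * qpoch q q (m - j))"
  by (simp add: qbinom_def)

lemma qbinom_Suc_right:
  assumes nzq: "\<And>i. 1 - q ^ Suc i \<noteq> 0"
  shows "qbinom q m (int (Suc j)) * (1 - q ^ Suc j) = qbinom q m (int j) * (1 - q ^ (m - j))"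
proof (cases "j < m")
  case True
  then have "m - j = Suc (m - Suc j)"
    by simp
  with True show ?thesis
    using qpoch_q_nonzero[OF nzq] nzq[of j] nzq[of "m - Suc j"]
    unfolding qbinom_of_nat[of "Suc j" m, OF Suc_leI[OF True]] qbinom_of_nat[of j m, OF less_imp_le[OF True]]
    by (simp add: qpoch_Suc divide_simps mult.commute)
qed (simp add: qbinom_def)

lemma qbinom_Suc_Suc:
  assumes nzq: "\<And>i. 1 - q ^ Suc i \<noteq> 0"
  shows "qbinom q (Suc m) (int (Suc j)) * (1 - q ^ Suc j) = qbinom q m (int j) * (1 - q ^ Suc m)"
proof (cases "j \<le> m")
  case True
  then show ?thesis
    using qpoch_q_nonzero[OF nzq] nzq[of j] nzq[of m]
    unfolding qbinom_of_nat[of "Suc j" "Suc m", OF Suc_le_mono[THEN iffD2, OF True]] qbinom_of_nat[of j m, OF True]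
    by (simp add: qpoch_Suc divide_simps mult.commute)
qed (simp add: qbinom_def)

text \<open>A(2m, 2j) for j \<ge> 0; the vanishing of qbinom above its range replaces the range test of Afun.\<close>

definition Aeven :: "complex \<Rightarrow> complex \<Rightarrow> complex \<Rightarrow> nat \<Rightarrow> nat \<Rightarrow> complex" where
  "Aeven a b q m j = qbinom q m (int j) * cfun (m - j) (q ^ (2 * j) * a) (q ^ j * b) q"

lemma Afun_even_even: "Afun a b q (2 * m) (2 * int j) = Aeven a b q m j"
  by (simp add: Afun_def Aeven_def qbinom_def)

lemma Afun_odd_odd: "Afun a b q (2 * m + 1) (2 * int j + 1) = Aeven (q * a) (q * b) q m j"
  by (simp add: Afun_def Aeven_def qbinom_def ac_simps)

lemma Afun_odd_diff: "odd (int n - k) \<Longrightarrow> Afun a b q n k = 0"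
  by (simp add: Afun_def)

lemma Tfun_odd: "Tfun a b q (2 * j + 1)
    = q ^ j * (1 - q ^ (j + 1)) * (b - q ^ j * a) / ((1 - q ^ (2 * j + 1) * a) * (1 - q ^ (2 * j) * a))"
  by (simp add: Tfun_def)

lemma Tfun_even: "Tfun a b q (2 * Suc j)
    = q ^ Suc j * (1 - q ^ Suc j * b) * (1 - q ^ j * a)
      / ((1 - q ^ (2 * j + 1) * a) * (1 - q ^ (2 * Suc j) * a))"
  by (simp add: Tfun_def)

lemma Aeven_odd_row_step:
  assumes nza: "\<And>i. 1 - q ^ i * a \<noteq> 0"
    and nzq: "\<And>i. 1 - q ^ Suc i \<noteq> 0"
  shows "Aeven (q * a) (q * b) q m j = Aeven a b q m j + Tfun a b q (2 * j + 1) * Aeven a b q m (Suc j)"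
proof -
  define x where "x = q ^ (2 * j) * a"
  define y where "y = q ^ j * b"
  have nzx: "\<And>i. 1 - q ^ i * x \<noteq> 0"
    unfolding x_def by (metis nza power_add mult.assoc)
  have "q ^ (2 * j + 1) * a = q * x" "q ^ (2 * j) * a = x"
    "q ^ j * (1 - q ^ (j + 1)) * (b - q ^ j * a) = (1 - q ^ Suc j) * (y - x)"
    unfolding x_def y_def mult_2 power_add by (simp_all add: algebra_simps)
  then have T: "Tfun a b q (2 * j + 1) = (1 - q ^ Suc j) * (y - x) / ((1 - x) * (1 - q * x))"
    unfolding Tfun_odd by (simp only: mult.commute[of "1 - q * x"])
  have x2: "q ^ (2 * Suc j) * a = q\<^sup>2 * x"
    unfolding x_def by (simp add: power2_eq_square mult.assoc)
  have "Aeven a b q m j + Tfun a b q (2 * j + 1) * Aeven a b q m (Suc j)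
      = qbinom q m (int j) * cfun (m - j) x y q
        + (y - x) / ((1 - x) * (1 - q * x)) * (qbinom q m (int (Suc j)) * (1 - q ^ Suc j))
          * cfun (m - j - 1) (q\<^sup>2 * x) (q * y) q"
    unfolding Aeven_def T x2 by (simp add: x_def y_def mult_ac)
  also have "\<dots> = qbinom q m (int j) * (cfun (m - j) x y q
          + (1 - q ^ (m - j)) * (y - x) / ((1 - x) * (1 - q * x)) * cfun (m - j - 1) (q\<^sup>2 * x) (q * y) q)"
    unfolding qbinom_Suc_right[OF nzq] by (simp add: distrib_left mult_ac)
  also have "\<dots> = qbinom q m (int j) * cfun (m - j) (q * x) (q * y) q"
    unfolding cfun_contiguous_ab[OF nzx, symmetric] by simp
  also have "\<dots> = Aeven (q * a) (q * b) q m j"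
    by (simp add: Aeven_def x_def y_def ac_simps)
  finally show ?thesis ..
qed

lemma Aeven_even_row_step:
  assumes nza: "\<And>i. 1 - q ^ i * a \<noteq> 0"
    and nzq: "\<And>i. 1 - q ^ Suc i \<noteq> 0"
  shows "Aeven a b q (Suc m) (Suc j)
       = Aeven (q * a) (q * b) q m j + Tfun a b q (2 * Suc j) * Aeven (q * a) (q * b) q m (Suc j)"
proof (cases "j \<le> m")
  case True
  define x where "x = q ^ (2 * j + 1) * a"
  define y where "y = q ^ Suc j * b"
  define u where "u = q ^ Suc j"
  have nzx: "\<And>i. 1 - q ^ i * x \<noteq> 0"
    unfolding x_def by (metis nza power_add mult.assoc)
  have "q ^ (2 * Suc j) * a = q * x" "q ^ (2 * j + 1) * a = x"
    "q ^ Suc j * (1 - q ^ Suc j * b) * (1 - q ^ j * a) = (u - x) * (1 - y)"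
    unfolding x_def y_def u_def mult_2 power_add by (simp_all add: algebra_simps)
  then have T: "Tfun a b q (2 * Suc j) = (u - x) * (1 - y) / ((1 - x) * (1 - q * x))"
    unfolding Tfun_even by (simp only: mult.commute[of "1 - q * x"])
  have qbinom_Suc: "qbinom q m (int (Suc j)) * (1 - u) = qbinom q m (int j) * (1 - q ^ (m - j))"
    unfolding u_def by (rule qbinom_Suc_right[OF nzq])
  have "q ^ Suc m = u * q ^ (m - j)"
    using True unfolding u_def by (simp flip: power_add)
  then have lhs: "(1 - u) * Aeven a b q (Suc m) (Suc j)
      = qbinom q m (int j) * ((1 - u * q ^ (m - j)) * cfun (m - j) (q * x) y q)"
    using qbinom_Suc_Suc[OF nzq, of m j]
    unfolding Aeven_def u_def x_def y_def
    by (simp add: mult_2 power_add mult_ac)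
  have "(1 - u) * (Aeven (q * a) (q * b) q m j
        + Tfun a b q (2 * Suc j) * Aeven (q * a) (q * b) q m (Suc j))
      = (1 - u) * (qbinom q m (int j) * cfun (m - j) x y q)
        + (u - x) * (1 - y) / ((1 - x) * (1 - q * x)) * (qbinom q m (int (Suc j)) * (1 - u))
          * cfun (m - j - 1) (q\<^sup>2 * x) (q * y) q"
    unfolding Aeven_def T
    by (simp add: x_def y_def mult_2 power_add power2_eq_square distrib_left mult_ac)
  also have "\<dots> = qbinom q m (int j) * ((1 - u) * cfun (m - j) x y q
      + (1 - q ^ (m - j)) * (u - x) * (1 - y) / ((1 - x) * (1 - q * x))
        * cfun (m - j - 1) (q\<^sup>2 * x) (q * y) q)"
    unfolding qbinom_Suc by (simp add: distrib_left mult_ac)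
  also have "\<dots> = (1 - u) * Aeven a b q (Suc m) (Suc j)"
    unfolding lhs cfun_contiguous_a[OF nzx] ..
  finally show ?thesis
    using nzq[of j] unfolding u_def by simp
qed (simp add: Aeven_def qbinom_def)

lemma Aeven_0_right:
  assumes nzq: "\<And>i. 1 - q ^ Suc i \<noteq> 0"
  shows "Aeven a b q m 0 = cfun m a b q"
  using qpoch_q_nonzero[OF nzq] by (simp add: Aeven_def qbinom_def)

lemma Afun_row_0: "Afun a b q 0 k = (if k = 0 then 1 else 0)"
  unfolding Afun_def Let_def qbinom_def by simp presburger

lemma Afun_column_0:
  assumes nza: "\<And>i. 1 - q ^ i * a \<noteq> 0"
    and nzq: "\<And>i. 1 - q ^ Suc i \<noteq> 0"
    and "n \<ge> 1"
  shows "Afun a b q n 0 = Tfun a b q 0 * Afun a b q (n - 1) 1"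
proof (cases "even n")
  case True
  then obtain m' where "n = 2 * m'" ..
  with \<open>n \<ge> 1\<close> obtain m where n: "n = 2 * Suc m"
    by (cases m') simp_all
  have "1 - a \<noteq> 0"
    using nza[of 0] by simp
  then show ?thesis
    using Afun_even_even[of a b q "Suc m" 0] Afun_odd_odd[of a b q m 0]
    by (simp add: n Aeven_0_right[OF nzq] cfun_Suc_left Tfun_def)
next
  case False
  with \<open>n \<ge> 1\<close> show ?thesis
    by (simp add: Afun_odd_diff)
qed

lemma same_parity_cases:
  fixes n k :: nat
  assumes "n \<ge> 1" "k \<ge> 1" "even n = even k"
  obtains (even) m j where "n = 2 * Suc m" "k = 2 * Suc j"
    | (odd) m j where "n = 2 * m + 1" "k = 2 * j + 1"
proof (cases "even n")
  case True
  then obtain m j where "n = 2 * m" "k = 2 * j"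
    using assms(3) by (auto elim!: evenE)
  with assms(1,2) show ?thesis
    using even[of "m - 1" "j - 1"] by simp
next
  case False
  then obtain m j where "n = 2 * m + 1" "k = 2 * j + 1"
    using assms(3) by (auto elim!: oddE)
  then show ?thesis
    using odd by simp
qed

lemma Afun_recurrence:
  assumes nza: "\<And>i. 1 - q ^ i * a \<noteq> 0"
    and nzq: "\<And>i. 1 - q ^ Suc i \<noteq> 0"
    and "n \<ge> 1" and "k \<ge> 1"
  shows "Afun a b q n k = Afun a b q (n - 1) (k - 1) + Tfun a b q (nat k) * Afun a b q (n - 1) (k + 1)"
proof (cases "odd (int n - k)")
  case True
  moreover have "int (n - 1) - (k - 1) = int n - k" "int (n - 1) - (k + 1) = int n - k - 2"
    using \<open>n \<ge> 1\<close> by (simp_all add: of_nat_diff)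
  ultimately show ?thesis
    by (simp add: Afun_odd_diff)
next
  case False
  define k' where "k' = nat k"
  have k': "k = int k'" "k' \<ge> 1"
    using \<open>k \<ge> 1\<close> by (simp_all add: k'_def)
  have "even n = even k'"
    using False unfolding k' by simp
  with \<open>n \<ge> 1\<close> \<open>k' \<ge> 1\<close> show ?thesis
  proof (cases rule: same_parity_cases)
    case (even m j)
    then have "n - 1 = 2 * m + 1" "k - 1 = 2 * int j + 1" "k + 1 = 2 * int (Suc j) + 1"
      "k = 2 * int (Suc j)" "nat k = 2 * Suc j"
      using k' by simp_all
    then show ?thesis
      using Aeven_even_row_step[OF nza nzq]
      by (simp only: even Afun_even_even Afun_odd_odd)
  next
    case (odd m j)
    then have "n - 1 = 2 * m" "k - 1 = 2 * int j" "k + 1 = 2 * int (Suc j)"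
      "k = 2 * int j + 1" "nat k = 2 * j + 1"
      using k' by simp_all
    then show ?thesis
      using Aeven_odd_row_step[OF nza nzq]
      by (simp only: odd Afun_even_even Afun_odd_odd)
  qed
qed

theorem theorem1:
  fixes a b q :: complex
  assumes nza: "\<And>m::nat. 1 - q ^ m * a \<noteq> 0"
    and nzq: "\<And>m::nat. m \<ge> 1 \<Longrightarrow> 1 - q ^ m \<noteq> 0"
  shows "(\<forall>k::int. Afun a b q 0 k = (if k = 0 then 1 else 0))
       \<and> (\<forall>n::nat. n \<ge> 1 \<longrightarrow> Afun a b q n 0 = Tfun a b q 0 * Afun a b q (n - 1) 1)
       \<and> (\<forall>n::nat. \<forall>k::int. n \<ge> 1 \<and> k \<ge> 1 \<longrightarrow>
            Afun a b q n k = Afun a b q (n - 1) (k - 1) + Tfun a b q (nat k) * Afun a b q (n - 1) (k + 1))"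
proof -
  have nzq': "\<And>i. 1 - q ^ Suc i \<noteq> 0"
    by (rule nzq) simp
  show ?thesis
    using Afun_row_0 Afun_column_0[OF nza nzq'] Afun_recurrence[OF nza nzq'] by blast
qed

end
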